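(* Let $M>0$, $0<a<M$, $\mu>0$, $m\in\mathbb{Z}\setminus\{0\}$, $n\in\{0,1,2,\dots\}$, $l\in\{|m|,|m|+1,\dots\}$, and define $$\alpha_1=\frac{ma}{\mu M^2},\quad \alpha_2=\frac{2n+1}{\mu M}\sqrt{1-\frac{a^2}{M^2}},\quad \alpha=\alpha_1-i\alpha_2,\quad \epsilon=2\sqrt{1-\frac{a^2}{M^2}},\quad \beta=6-\frac{l(l+1)}{\mu^2M^2}.$$ Assume $\beta\geq 0$ and define $$q(z)=z^4+\frac{4z}{\beta+\epsilon}\left[(2+\epsilon)(z^2+1)+\alpha(z^2-1)\right]+2\,\frac{16-\beta+3\epsilon}{\beta+\epsilon}\,z^2+1,\quad z\in\mathbb{C}.$$ Then $q$ has no real roots. In addition, if $\alpha_1\geq 0$ and $0\leq\beta\leq 16+3\epsilon$, then $$\lim_{x\to\infty,\ x\in\mathbb{R}}\arctan\left(\frac{\mathrm{Im}(q(x))}{\mathrm{Re}(q(x))}\right)=0.$$ *)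

theory Defs
  imports "HOL-Analysis.Analysis"
begin

definition alpha1 :: "real \<Rightarrow> real \<Rightarrow> real \<Rightarrow> int \<Rightarrow> real" where
  "alpha1 M a \<mu> m = real_of_int m * a / (\<mu> * M^2)"

definition alpha2 :: "real \<Rightarrow> real \<Rightarrow> real \<Rightarrow> nat \<Rightarrow> real" where
  "alpha2 M a \<mu> n = (2 * real n + 1) / (\<mu> * M) * sqrt (1 - a^2 / M^2)"

definition alpha :: "real \<Rightarrow> real \<Rightarrow> real \<Rightarrow> int \<Rightarrow> nat \<Rightarrow> complex" where
  "alpha M a \<mu> m n = complex_of_real (alpha1 M a \<mu> m) - \<i> * complex_of_real (alpha2 M a \<mu> n)"

definition eps :: "real \<Rightarrow> real \<Rightarrow> real" where
  "eps M a = 2 * sqrt (1 - a^2 / M^2)"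

definition beta :: "real \<Rightarrow> real \<Rightarrow> nat \<Rightarrow> real" where
  "beta M \<mu> l = 6 - real l * (real l + 1) / (\<mu>^2 * M^2)"

definition qfun :: "real \<Rightarrow> real \<Rightarrow> real \<Rightarrow> int \<Rightarrow> nat \<Rightarrow> nat \<Rightarrow> complex \<Rightarrow> complex" where
  "qfun M a \<mu> m n l z =
     (let \<beta> = complex_of_real (beta M \<mu> l); \<epsilon> = complex_of_real (eps M a);
          \<alpha> = alpha M a \<mu> m n
      in z^4 + 4 * z / (\<beta> + \<epsilon>) * ((2 + \<epsilon>) * (z^2 + 1) + \<alpha> * (z^2 - 1))
         + 2 * ((16 - \<beta> + 3 * \<epsilon>) / (\<beta> + \<epsilon>)) * z^2 + 1)"

end

(*
  On the real axis the imaginary part of q is 4 \<alpha>\<^sub>2 x (1 - x^2) / (\<beta> + \<epsilon>), with \<alpha>\<^sub>2 > 0,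
  so a real root must be one of 0, 1, -1; there q takes the values 1, 16 (3 + \<epsilon>) / (\<beta> + \<epsilon>)
  and 16 / (\<beta> + \<epsilon>), none of which is 0. For the limit, Im q(x) is a cubic and Re q(x) a
  monic quartic in x, so their quotient tends to 0 and so does its arctangent.
*)
theory Submission
  imports Defs "HOL-Real_Asymp.Real_Asymp"
begin

lemma sqrt_one_minus_sq_ratio_pos:
  fixes a M :: real
  assumes "\<bar>a\<bar> < M"
  shows "0 < sqrt (1 - a^2 / M^2)"
proof -
  have "a^2 < M^2"
    using power_strict_mono[OF assms, of 2] by simp
  moreover have "0 < M^2"
    using assms by simp
  ultimately show ?thesis
    by simp
qed

lemma eps_pos: "\<bar>a\<bar> < M \<Longrightarrow> 0 < eps M a"
  using sqrt_one_minus_sq_ratio_pos[of a M] unfolding eps_def by linarith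

lemma alpha2_pos:
  assumes "\<bar>a\<bar> < M" and "0 < \<mu>"
  shows "0 < alpha2 M a \<mu> n"
proof -
  have "0 < (2 * real n + 1) / (\<mu> * M)"
    using assms by simp
  then show ?thesis
    unfolding alpha2_def using sqrt_one_minus_sq_ratio_pos[OF assms(1)] by (rule mult_pos_pos)
qed

(* No hypothesis b + e \<noteq> 0: both sides read division by 0 as 0. *)
lemma quartic_of_real:
  fixes b e a1 a2 x :: real
  defines "s \<equiv> b + e"
  shows "(of_real x)^4 + 4 * of_real x / (of_real b + of_real e)
           * ((2 + of_real e) * ((of_real x)^2 + 1)
              + (of_real a1 - \<i> * of_real a2) * ((of_real x)^2 - 1))
         + 2 * ((16 - of_real b + 3 * of_real e) / (of_real b + of_real e)) * (of_real x)^2 + 1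
       = of_real (x^4 + 4 * (2 + e + a1) / s * x^3 + 2 * (16 - b + 3 * e) / s * x^2
                  + 4 * (2 + e - a1) / s * x + 1)
         + \<i> * of_real (4 * a2 / s * x * (1 - x^2))"
proof -
  have div: "z / (of_real b + of_real e) = z * of_real (inverse s)" for z :: complex
    by (simp add: s_def divide_inverse flip: of_real_add)
  show ?thesis
    unfolding div by (simp add: divide_inverse) algebra
qed

lemma Re_qfun_of_real:
  "Re (qfun M a \<mu> m n l (of_real x)) =
     x^4 + 4 * (2 + eps M a + alpha1 M a \<mu> m) / (beta M \<mu> l + eps M a) * x^3
     + 2 * (16 - beta M \<mu> l + 3 * eps M a) / (beta M \<mu> l + eps M a) * x^2
     + 4 * (2 + eps M a - alpha1 M a \<mu> m) / (beta M \<mu> l + eps M a) * x + 1"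
  unfolding qfun_def alpha_def Let_def quartic_of_real by simp

lemma Im_qfun_of_real:
  "Im (qfun M a \<mu> m n l (of_real x)) =
     4 * alpha2 M a \<mu> n / (beta M \<mu> l + eps M a) * x * (1 - x^2)"
  unfolding qfun_def alpha_def Let_def quartic_of_real by simp

lemma qfun_0: "qfun M a \<mu> m n l 0 = 1"
  by (simp add: qfun_def)

lemma Re_qfun_1:
  assumes "beta M \<mu> l + eps M a \<noteq> 0"
  shows "Re (qfun M a \<mu> m n l 1) = 16 * (3 + eps M a) / (beta M \<mu> l + eps M a)"
proof -
  have "Re (qfun M a \<mu> m n l 1) =
      1 + 4 * (2 + eps M a + alpha1 M a \<mu> m) / (beta M \<mu> l + eps M a)
      + 2 * (16 - beta M \<mu> l + 3 * eps M a) / (beta M \<mu> l + eps M a)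
      + 4 * (2 + eps M a - alpha1 M a \<mu> m) / (beta M \<mu> l + eps M a) + 1"
    using Re_qfun_of_real[of M a \<mu> m n l 1] by simp
  also have "\<dots> = 16 * (3 + eps M a) / (beta M \<mu> l + eps M a)"
    using assms by (simp add: divide_simps)
  finally show ?thesis .
qed

lemma Re_qfun_minus_1:
  assumes "beta M \<mu> l + eps M a \<noteq> 0"
  shows "Re (qfun M a \<mu> m n l (-1)) = 16 / (beta M \<mu> l + eps M a)"
proof -
  have "Re (qfun M a \<mu> m n l (-1)) =
      1 - 4 * (2 + eps M a + alpha1 M a \<mu> m) / (beta M \<mu> l + eps M a)
      + 2 * (16 - beta M \<mu> l + 3 * eps M a) / (beta M \<mu> l + eps M a)
      - 4 * (2 + eps M a - alpha1 M a \<mu> m) / (beta M \<mu> l + eps M a) + 1"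
    using Re_qfun_of_real[of M a \<mu> m n l "-1"] by simp
  also have "\<dots> = 16 / (beta M \<mu> l + eps M a)"
    using assms by (simp add: divide_simps)
  finally show ?thesis .
qed

lemma qfun_of_real_nonzero:
  assumes "\<bar>a\<bar> < M" and "0 < \<mu>" and "beta M \<mu> l + eps M a \<noteq> 0"
  shows "qfun M a \<mu> m n l (of_real x) \<noteq> 0"
proof
  assume root: "qfun M a \<mu> m n l (of_real x) = 0"
  have "0 < alpha2 M a \<mu> n"
    using assms(1,2) by (rule alpha2_pos)
  then have "x * (1 - x^2) = 0"
    using arg_cong[OF root, of Im] assms(3) by (simp add: Im_qfun_of_real)
  then consider "x = 0" | "x = 1" | "x = -1"
    by (auto simp: power2_eq_1_iff)
  then show False
    using arg_cong[OF root, of Re] eps_pos[OF assms(1)] assms(3)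
    by cases (simp_all add: qfun_0 Re_qfun_1 Re_qfun_minus_1)
qed

lemma tendsto_cubic_div_quartic_at_top:
  "((\<lambda>x::real. (c3 * x^3 + c2 * x^2 + c1 * x + c0) / (x^4 + d3 * x^3 + d2 * x^2 + d1 * x + d0))
     \<longlongrightarrow> 0) at_top"
  by real_asymp

lemma tendsto_arctan_Im_div_Re_qfun:
  "((\<lambda>x. arctan (Im (qfun M a \<mu> m n l (of_real x)) / Re (qfun M a \<mu> m n l (of_real x))))
     \<longlongrightarrow> 0) at_top"
proof -
  define k where "k = 4 * alpha2 M a \<mu> n / (beta M \<mu> l + eps M a)"
  have Im_cubic: "Im (qfun M a \<mu> m n l (of_real x)) = (- k) * x^3 + 0 * x^2 + k * x + 0" for x
    unfolding Im_qfun_of_real k_def[symmetric] by (simp add: algebra_simps power2_eq_square power3_eq_cube)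
  show ?thesis
    unfolding Im_cubic Re_qfun_of_real
    by (rule tendsto_arctan[OF tendsto_cubic_div_quartic_at_top, simplified])
qed

theorem mainTheorem8:
  fixes M a \<mu> :: real and m :: int and n l :: nat
  assumes "M > 0" and "0 < a" and "a < M" and "\<mu> > 0" and "m \<noteq> 0"
    and "int l \<ge> \<bar>m\<bar>"
    and "beta M \<mu> l \<ge> 0"
  shows "(\<forall>x::real. qfun M a \<mu> m n l (complex_of_real x) \<noteq> 0)
    \<and> (alpha1 M a \<mu> m \<ge> 0 \<and> beta M \<mu> l \<le> 16 + 3 * eps M a \<longrightarrow>
        ((\<lambda>x::real. arctan (Im (qfun M a \<mu> m n l (complex_of_real x))
                          / Re (qfun M a \<mu> m n l (complex_of_real x)))) \<longlongrightarrow> 0) at_top)"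
proof -
  have a_lt_M: "\<bar>a\<bar> < M"
    using assms(2,3) by simp
  then have "beta M \<mu> l + eps M a \<noteq> 0"
    using eps_pos assms(7) by (metis add_nonneg_pos less_irrefl)
  then show ?thesis
    using qfun_of_real_nonzero[OF a_lt_M assms(4)] tendsto_arctan_Im_div_Re_qfun by blast
qed

end
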